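(* Let $m\ge1$ and, for $\mathfrak{g}\in\{\mathfrak{h},\mathfrak{r},\mathfrak{d}\}$, let $\mathcal{G}(q)=\max\{\mathfrak{g}(\tau):\tau\in T,\ \rho(\tau)\le q\}$. Then for $q\in\{\frac12,1,\frac32,2,\dots\}$: $\mathcal{G}(q)=2q$ for $\mathfrak{g}=\mathfrak{h}$ (simple iterations); $\mathcal{G}(q)=\lfloor q+\frac12\rfloor$ for $\mathfrak{g}=\mathfrak{r}$ (modified Newton iterations); $\mathcal{G}(q)=\lfloor\log_2(q+\frac12)\rfloor+1$ for $\mathfrak{g}=\mathfrak{d}$ (full Newton iterations). Moreover $\mathcal{G}(q)=\max\{\mathfrak{g}'(u):u\in U_f,\ \rho(u)\le q\}$.
   Context: $T$ is the set of $(m+1)$-colored rooted trees: the empty tree $\emptyset$ and all $\tau=[\tau_1,\dots,\tau_\kappa]_l$ with $l\in\{0,\dots,m\}$, $\kappa\ge0$, $\tau_1,\dots,\tau_\kappa\in T\setminus\{\emptyset\}$ (unordered), formed by joining the roots of the $\tau_j$ by edges to a new root of color $l$ ($\bullet_l$ when $\kappa=0$). Order: $\rho(\emptyset)=0$, $\rho([\tau_1,\dots,\tau_\kappa]_l)=\sum_j\rho(\tau_j)+1$ if $l=0$, and $=\sum_j\rho(\tau_j)+\frac12$ if $l\ge1$. $U_f$ is the set of trees $u=[\tau_1,\dots,\tau_\kappa]_f$, $\kappa\ge0$, $\tau_j\in T\setminus\{\emptyset\}$, with $\rho(u)=\sum_j\rho(\tau_j)$ and $\mathfrak{g}'(u)=\max_j\mathfrak{g}(\tau_j)$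 ($0$ if $\kappa=0$). Maxima over empty sets are $0$. $\mathfrak{h}(\emptyset)=0$, $\mathfrak{h}(\bullet_l)=1$, $\mathfrak{h}([\tau_1,\dots,\tau_\kappa]_l)=1+\max_j\mathfrak{h}(\tau_j)$; $\mathfrak{r}(\emptyset)=0$, $\mathfrak{r}(\bullet_l)=1$, $\mathfrak{r}([\tau_1]_l)=\mathfrak{r}(\tau_1)$, $\mathfrak{r}([\tau_1,\dots,\tau_\kappa]_l)=1+\max_j\mathfrak{r}(\tau_j)$ for $\kappa\ge2$; $\mathfrak{d}(\emptyset)=0$, $\mathfrak{d}(\bullet_l)=1$, $\mathfrak{d}([\tau_1,\dots,\tau_\kappa]_l)=M$ if exactly one $i$ has $\mathfrak{d}(\tau_i)=M:=\max_j\mathfrak{d}(\tau_j)$, and $M+1$ if at least two indices attain $M$. *)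

theory Defs
  imports Complex_Main
begin

text \<open>(m+1)-colored rooted trees. Children are stored as a list; all notions below
  are invariant under permuting children, so this represents unordered trees.\<close>
datatype ctree = Empty | Nd nat "ctree list"

fun wf :: "nat \<Rightarrow> ctree \<Rightarrow> bool" where
  "wf m Empty = True"
| "wf m (Nd l ts) = (l \<le> m \<and> (\<forall>t\<in>set ts. t \<noteq> Empty \<and> wf m t))"

fun rho :: "ctree \<Rightarrow> real" where
  "rho Empty = 0"
| "rho (Nd l ts) = sum_list (map rho ts) + (if l = 0 then 1 else 1/2)"

fun hgt :: "ctree \<Rightarrow> nat" where
  "hgt Empty = 0"
| "hgt (Nd l ts) = 1 + Max (insert 0 (set (map hgt ts)))"

fun rr :: "ctree \<Rightarrow> nat" where
  "rr Empty = 0"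
| "rr (Nd l []) = 1"
| "rr (Nd l [t]) = rr t"
| "rr (Nd l ts) = 1 + Max (insert 0 (set (map rr ts)))"

fun dd :: "ctree \<Rightarrow> nat" where
  "dd Empty = 0"
| "dd (Nd l []) = 1"
| "dd (Nd l ts) =
     (if 2 \<le> length (filter (\<lambda>x. x = Max (set (map dd ts))) (map dd ts))
      then Max (set (map dd ts)) + 1 else Max (set (map dd ts)))"

definition Gmax :: "(ctree \<Rightarrow> nat) \<Rightarrow> nat \<Rightarrow> real \<Rightarrow> nat" where
  "Gmax g m q = Max {g t | t. wf m t \<and> rho t \<le> q}"

text \<open>Trees u = [\<tau>_1,...,\<tau>_\<kappa>]_f in U_f, represented by their list of subtrees.\<close>
definition inU :: "nat \<Rightarrow> ctree list \<Rightarrow> bool" where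
  "inU m ts = (\<forall>t\<in>set ts. t \<noteq> Empty \<and> wf m t)"

definition rhoU :: "ctree list \<Rightarrow> real" where
  "rhoU ts = sum_list (map rho ts)"

definition gprime :: "(ctree \<Rightarrow> nat) \<Rightarrow> ctree list \<Rightarrow> nat" where
  "gprime g ts = Max (insert 0 (set (map g ts)))"

definition GmaxU :: "(ctree \<Rightarrow> nat) \<Rightarrow> nat \<Rightarrow> real \<Rightarrow> nat" where
  "GmaxU g m q = Max {gprime g ts | ts. inU m ts \<and> rhoU ts \<le> q}"

end

theory Submission
  imports Defs
begin

text \<open>Every node weighs at least 1/2, exactly 1/2 when its colour is nonzero. Hence
  \<open>h(\<tau>) \<le> 2 \<rho>(\<tau>)\<close>. A branching node has two nonempty children, each of weight at least
  1/2, so induction gives \<open>r(\<tau>) \<le> \<rho>(\<tau>) + 1/2\<close>; and \<open>d\<close> grows only when two children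
  attain the maximum, so induction gives \<open>2^d(\<tau>) \<le> 2 \<rho>(\<tau>) + 1\<close>. Paths, caterpillars and
  perfect binary trees of colour-1 nodes attain these bounds. For \<open>U_f\<close>, each subtree of \<open>u\<close>
  weighs at most \<open>\<rho>(u)\<close>, and \<open>u = [\<tau>]_f\<close> recovers every nonempty tree.\<close>

lemma rho_nonneg: "0 \<le> rho t"
  by (induction t) (auto intro!: add_nonneg_nonneg sum_list_nonneg)

lemma sum_list_rho_nonneg: "0 \<le> sum_list (map rho ts)"
  by (intro sum_list_nonneg) (auto simp: rho_nonneg)

lemma rho_ge_half: "t \<noteq> Empty \<Longrightarrow> 1/2 \<le> rho t"
  using sum_list_rho_nonneg by (cases t) auto

lemma rho_le_sum_list: "t \<in> set ts \<Longrightarrow> rho t \<le> sum_list (map rho ts)"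
  by (induction ts) (auto intro: add_increasing add_increasing2 rho_nonneg sum_list_rho_nonneg)

lemma rho_add_le_sum_list:
  assumes "t \<in> set ts" "t' \<in> set (remove1 t ts)"
  shows "rho t + rho t' \<le> sum_list (map rho ts)"
  using sum_list_map_remove1[OF assms(1), of rho] rho_le_sum_list[OF assms(2)] by simp

lemma filter_length_ge_2_remove1:
  assumes "x \<in> set xs" "P x" "2 \<le> length (filter P xs)"
  shows "\<exists>y \<in> set (remove1 x xs). P y"
proof -
  have "x \<in> set (filter P xs)"
    using assms(1,2) by simp
  then have "1 \<le> length (filter P (remove1 x xs))"
    using assms(3) by (simp add: filter_remove1 length_remove1)
  then show ?thesis
    by (metis filter_empty_conv length_0_conv not_one_le_zero)
qed

lemma hgt_le_twice_rho: "real (hgt t) \<le> 2 * rho t"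
proof (induction t)
  case Empty
  then show ?case by simp
next
  case (Nd l ts)
  let ?M = "Max (insert 0 (set (map hgt ts)))"
  have "?M \<in> insert 0 (set (map hgt ts))"
    by (rule Max_in) auto
  then have "real ?M \<le> 2 * sum_list (map rho ts)"
    using Nd.IH rho_le_sum_list sum_list_rho_nonneg by fastforce
  then show ?case by simp
qed

lemma rr_le_rho: "wf m t \<Longrightarrow> real (rr t) \<le> rho t + 1/2"
proof (induction t rule: rr.induct)
  case (3 l t)
  then show ?case by simp
next
  case (4 l t\<^sub>1 t\<^sub>2 ts)
  let ?ts = "t\<^sub>1 # t\<^sub>2 # ts"
  let ?M = "Max (insert 0 (set (map rr ?ts)))"
  have children: "\<forall>t\<in>set ?ts. t \<noteq> Empty \<and> wf m t"
    using "4.prems" by simp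
  have "?M \<in> insert 0 (set (map rr ?ts))"
    by (rule Max_in) auto
  then have "real ?M \<le> sum_list (map rho ?ts)"
  proof
    assume "?M \<in> set (map rr ?ts)"
    then obtain t where t: "t \<in> set ?ts" "rr t = ?M"
      by (metis imageE set_map)
    have "remove1 t ?ts \<noteq> []"
      using t(1) by (auto simp: length_remove1 dest: arg_cong[of _ _ length])
    then obtain t' where t': "t' \<in> set (remove1 t ?ts)"
      using list.set_sel(1) by blast
    then have "t' \<noteq> Empty"
      using children subsetD[OF set_remove1_subset t'] by blast
    then show ?thesis
      using "4.IH" t children rho_add_le_sum_list[OF t(1) t'] rho_ge_half by fastforce
  qed (use sum_list_rho_nonneg[of ?ts] in auto)
  then show ?case by simp
qed simp_all

lemma two_pow_dd_le_rho: "wf m t \<Longrightarrow> 2 ^ dd t \<le> 2 * rho t + 1"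
proof (induction t rule: dd.induct)
  case (3 l t\<^sub>1 ts)
  let ?ts = "t\<^sub>1 # ts"
  let ?M = "Max (set (map dd ?ts))"
  have IH: "(2::real) ^ dd t \<le> 2 * rho t + 1" if "t \<in> set ?ts" for t
    using "3.IH" "3.prems" that by auto
  have "?M \<in> set (map dd ?ts)"
    by (rule Max_in) auto
  then obtain t where t: "t \<in> set ?ts" "dd t = ?M"
    by (metis imageE set_map)
  have node: "sum_list (map rho ?ts) + 1/2 \<le> rho (Nd l ?ts)"
    by simp
  show ?case
  proof (cases "2 \<le> length (filter (\<lambda>x. x = ?M) (map dd ?ts))")
    case True
    then have "2 \<le> length (filter (\<lambda>t. dd t = ?M) ?ts)"
      by (simp only: filter_map length_map o_def)
    then obtain t' where t': "t' \<in> set (remove1 t ?ts)" "dd t' = ?M"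
      using filter_length_ge_2_remove1[of t ?ts "\<lambda>t. dd t = ?M"] t by blast
    have "(2::real) ^ ?M \<le> 2 * rho t' + 1"
      using IH[OF subsetD[OF set_remove1_subset t'(1)]] t'(2) by simp
    moreover have "(2::real) ^ ?M \<le> 2 * rho t + 1"
      using IH[OF t(1)] t(2) by simp
    ultimately have "(2::real) ^ (?M + 1) \<le> 2 * sum_list (map rho ?ts) + 2"
      using rho_add_le_sum_list[OF t(1) t'(1)] by simp
    then show ?thesis
      using True node by (simp only: dd.simps if_True)
  next
    case False
    have "(2::real) ^ ?M \<le> 2 * sum_list (map rho ?ts) + 1"
      using IH[OF t(1)] rho_le_sum_list[OF t(1)] t(2) by simp
    then show ?thesis
      using False node by (simp only: dd.simps if_False)
  qed
qed simp_all

lemma Gmax_GmaxU_eqI: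
  assumes bound: "\<And>t. wf m t \<Longrightarrow> rho t \<le> q \<Longrightarrow> g t \<le> v"
    and witness: "wf m t\<^sub>0" "t\<^sub>0 \<noteq> Empty" "rho t\<^sub>0 \<le> q" "g t\<^sub>0 = v"
  shows "Gmax g m q = v \<and> GmaxU g m q = v"
proof
  have "{g t | t. wf m t \<and> rho t \<le> q} \<subseteq> {..v}"
    using bound by auto
  then show "Gmax g m q = v"
    unfolding Gmax_def by (rule Max_eqI[OF finite_subset]) (use bound witness in auto)
next
  have gprime_le: "gprime g ts \<le> v" if "inU m ts" "rhoU ts \<le> q" for ts
  proof -
    have "\<forall>t\<in>set ts. g t \<le> v"
      using that bound rho_le_sum_list unfolding inU_def rhoU_def by fastforce
    then show ?thesis
      unfolding gprime_def by simp
  qed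
  have "gprime g [t\<^sub>0] = v" "inU m [t\<^sub>0]" "rhoU [t\<^sub>0] \<le> q"
    using witness by (simp_all add: gprime_def inU_def rhoU_def)
  moreover have "{gprime g ts | ts. inU m ts \<and> rhoU ts \<le> q} \<subseteq> {..v}"
    using gprime_le by auto
  ultimately show "GmaxU g m q = v"
    unfolding GmaxU_def by (intro Max_eqI) (auto intro: finite_subset)
qed

fun path_tree :: "nat \<Rightarrow> ctree" where
  "path_tree 0 = Nd 1 []"
| "path_tree (Suc n) = Nd 1 [path_tree n]"

fun caterpillar :: "nat \<Rightarrow> ctree" where
  "caterpillar 0 = Nd 1 []"
| "caterpillar (Suc n) = Nd 1 [caterpillar n, Nd 1 []]"

fun perfect_tree :: "nat \<Rightarrow> ctree" where
  "perfect_tree 0 = Nd 1 []"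
| "perfect_tree (Suc n) = Nd 1 [perfect_tree n, perfect_tree n]"

lemma path_tree:
  "1 \<le> m \<Longrightarrow> wf m (path_tree n) \<and> path_tree n \<noteq> Empty
     \<and> hgt (path_tree n) = n + 1 \<and> rho (path_tree n) = (n + 1) / 2"
  by (induction n) (auto simp: field_simps)

lemma caterpillar:
  "1 \<le> m \<Longrightarrow> wf m (caterpillar n) \<and> caterpillar n \<noteq> Empty
     \<and> rr (caterpillar n) = n + 1 \<and> rho (caterpillar n) = n + 1/2"
  by (induction n) (auto simp: field_simps max_def)

lemma perfect_tree:
  "1 \<le> m \<Longrightarrow> wf m (perfect_tree n) \<and> perfect_tree n \<noteq> Empty
     \<and> dd (perfect_tree n) = n + 1 \<and> rho (perfect_tree n) = (2 ^ (n + 1) - 1) / 2"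
  by (induction n) (auto simp: field_simps)

lemma Gmax_hgt:
  fixes k :: nat
  assumes "1 \<le> m" "1 \<le> k"
  shows "Gmax hgt m (k / 2) = k \<and> GmaxU hgt m (k / 2) = k"
proof (rule Gmax_GmaxU_eqI)
  show "hgt t \<le> k" if "rho t \<le> k / 2" for t
    using hgt_le_twice_rho[of t] that by simp
  show "wf m (path_tree (k - 1))" "path_tree (k - 1) \<noteq> Empty"
    "rho (path_tree (k - 1)) \<le> k / 2" "hgt (path_tree (k - 1)) = k"
    using path_tree[OF assms(1), of "k - 1"] assms(2) by (auto simp: of_nat_diff)
qed

lemma Gmax_rr:
  fixes k :: nat
  assumes "1 \<le> m" "1 \<le> k"
  shows "Gmax rr m (k / 2) = (k + 1) div 2 \<and> GmaxU rr m (k / 2) = (k + 1) div 2"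
proof (rule Gmax_GmaxU_eqI)
  show "rr t \<le> (k + 1) div 2" if "wf m t" "rho t \<le> k / 2" for t
  proof -
    have "2 * real (rr t) \<le> real (k + 1)"
      using rr_le_rho[OF that(1)] that(2) by simp
    then show ?thesis
      by linarith
  qed
  let ?t = "caterpillar ((k + 1) div 2 - 1)"
  show "wf m ?t" "?t \<noteq> Empty" "rho ?t \<le> k / 2" "rr ?t = (k + 1) div 2"
    using caterpillar[OF assms(1), of "(k + 1) div 2 - 1"] assms(2)
    by (auto simp: of_nat_diff)
qed

lemma Gmax_dd:
  fixes k :: nat
  assumes "1 \<le> m" "1 \<le> k" "2 ^ d \<le> k + 1" "k + 1 < 2 ^ (d + 1)"
  shows "Gmax dd m (k / 2) = d \<and> GmaxU dd m (k / 2) = d"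
proof (rule Gmax_GmaxU_eqI)
  show "dd t \<le> d" if "wf m t" "rho t \<le> k / 2" for t
  proof -
    have "real ((2::nat) ^ dd t) \<le> real (k + 1)"
      using two_pow_dd_le_rho[OF that(1)] that(2) by simp
    then have "(2::nat) ^ dd t < 2 ^ (d + 1)"
      using assms(4) by linarith
    then show ?thesis
      using power_less_imp_less_exp[of "2::nat" "dd t" "d + 1"] by simp
  qed
  have "1 \<le> d"
    using assms(2,4) by (cases d) auto
  moreover have "real ((2::nat) ^ d) \<le> real (k + 1)"
    using assms(3) by (simp only: of_nat_le_iff)
  ultimately show "wf m (perfect_tree (d - 1))" "perfect_tree (d - 1) \<noteq> Empty"
    "rho (perfect_tree (d - 1)) \<le> k / 2" "dd (perfect_tree (d - 1)) = d"
    using perfect_tree[OF assms(1), of "d - 1"] by auto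
qed

lemma floor_half_add_half: "\<lfloor>real k / 2 + 1/2\<rfloor> = int ((k + 1) div 2)"
proof -
  have "real k / 2 + 1/2 = real (k + 1) / real 2"
    by (simp add: field_simps)
  then show ?thesis
    by (simp only: floor_divide_of_nat_eq)
qed

lemma floor_log2_half_add_half:
  "\<lfloor>log 2 (real k / 2 + 1/2)\<rfloor> + 1 = \<lfloor>log 2 (real (k + 1))\<rfloor>"
proof -
  have "log 2 (real k / 2 + 1/2) = log 2 (real (k + 1)) - 1"
    by (simp add: log_divide add_divide_distrib[symmetric] add.commute)
  then show ?thesis
    by (metis floor_diff_one diff_add_cancel)
qed

theorem mainTheorem7:
  fixes m k :: nat and q :: real
  assumes "m \<ge> 1" and "k \<ge> 1"
  defines "q \<equiv> real k / 2"
  shows "real (Gmax hgt m q) = 2 * q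
    \<and> int (Gmax rr m q) = \<lfloor>q + 1/2\<rfloor>
    \<and> int (Gmax dd m q) = \<lfloor>log 2 (q + 1/2)\<rfloor> + 1
    \<and> GmaxU hgt m q = Gmax hgt m q
    \<and> GmaxU rr m q = Gmax rr m q
    \<and> GmaxU dd m q = Gmax dd m q"
proof -
  define d where "d = nat \<lfloor>log 2 (real (k + 1))\<rfloor>"
  have "\<lfloor>log (real 2) (real (k + 1))\<rfloor> = int d"
    unfolding d_def by simp
  then have "2 ^ d \<le> k + 1 \<and> k + 1 < 2 ^ (d + 1)"
    using floor_log_nat_eq_powr_iff[of 2 "k + 1" d] by simp
  then have "Gmax dd m q = d \<and> GmaxU dd m q = d"
    using Gmax_dd assms unfolding q_def by blast
  moreover have "int d = \<lfloor>log 2 (q + 1/2)\<rfloor> + 1"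
    unfolding d_def q_def floor_log2_half_add_half by simp
  ultimately show ?thesis
    using Gmax_hgt[OF assms(1,2)] Gmax_rr[OF assms(1,2)] floor_half_add_half[of k]
    unfolding q_def by simp
qed

end
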